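(* Let $\Theta$ be a compact subset of $(0,1/2)\times(\mathbb{R}^2\setminus\Delta)$, $\Delta=\{(x,x):x\in\mathbb{R}\}$, and let $P<1/2$ be such that $p\le P$ for all $(p,\alpha,\beta)\in\Theta$. Let $X_1,\dots,X_n$ be real numbers. For $\theta=(p,\alpha,\beta)\in\Theta$, $u\in\mathbb{R}$, let $M(\theta,u)=pe^{iu\alpha}+(1-p)e^{iu\beta}$ and $$Z_k(\theta,u)=\frac{e^{iuX_k}}{M(\theta,u)}-\frac{e^{-iuX_k}}{M(\theta,-u)},$$ with $\dot Z_k$ and $\ddot Z_k$ its gradient and Hessian with respect to $\theta$. Then there is an absolute constant $C>0$ such that for all $u\in\mathbb{R}$, all $\theta,\theta'\in\Theta$ and all $k\in\{1,\dots,n\}$: 1. $\|\dot Z_k(\theta,u)-\dot Z_k(\theta',u)\|\le\|\theta-\theta'\|\cdot\frac{C(1+|u|+u^2)}{(1-2P)^3}$; 2. $\|\ddot Z_k(\theta,u)-\ddot Z_k(\theta',u)\|_2\le\|\theta-\theta'\|\cdot\frac{C(1+|u|+u^2+|u|^3)}{(1-2P)^4}$.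
   Context: $\|v\|$ is the Euclidean (Hermitian) norm of a vector and $\|A\|_2^2=\mathrm{tr}(A^\top A)$ for a matrix $A$. *)

theory Defs
  imports "HOL-Analysis.Analysis"
begin

text \<open>Parameters theta = (p, alpha, beta) are elements of real * real * real;
  the product norm on this type is the Euclidean norm of R^3.\<close>

definition Mfun :: "real \<times> real \<times> real \<Rightarrow> real \<Rightarrow> complex" where
  "Mfun \<theta> u = (case \<theta> of (p, \<alpha>, \<beta>) \<Rightarrow>
      complex_of_real p * exp (\<i> * complex_of_real (u * \<alpha>))
      + complex_of_real (1 - p) * exp (\<i> * complex_of_real (u * \<beta>)))"

definition Zfun :: "(nat \<Rightarrow> real) \<Rightarrow> nat \<Rightarrow> real \<times> real \<times> real \<Rightarrow> real \<Rightarrow> complex" where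
  "Zfun X k \<theta> u =
     exp (\<i> * complex_of_real (u * X k)) / Mfun \<theta> u
     - exp (- \<i> * complex_of_real (u * X k)) / Mfun \<theta> (- u)"

definition ebasis :: "nat \<Rightarrow> real \<times> real \<times> real" where
  "ebasis j = (if j = 0 then (1, 0, 0) else if j = 1 then (0, 1, 0) else (0, 0, 1))"

definition pderiv3 :: "nat \<Rightarrow> (real \<times> real \<times> real \<Rightarrow> complex) \<Rightarrow> real \<times> real \<times> real \<Rightarrow> complex" where
  "pderiv3 j f \<theta> = vector_derivative (\<lambda>t. f (\<theta> + t *\<^sub>R ebasis j)) (at 0)"

definition grad_dist :: "(real \<times> real \<times> real \<Rightarrow> complex) \<Rightarrow> real \<times> real \<times> real \<Rightarrow> real \<times> real \<times> real \<Rightarrow> real" where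
  "grad_dist f \<theta> \<theta>' = sqrt (\<Sum>j<3. (cmod (pderiv3 j f \<theta> - pderiv3 j f \<theta>'))\<^sup>2)"

definition hess_dist :: "(real \<times> real \<times> real \<Rightarrow> complex) \<Rightarrow> real \<times> real \<times> real \<Rightarrow> real \<times> real \<times> real \<Rightarrow> real" where
  "hess_dist f \<theta> \<theta>' = sqrt (\<Sum>i<3. \<Sum>j<3.
      (cmod (pderiv3 i (pderiv3 j f) \<theta> - pderiv3 i (pderiv3 j f) \<theta>'))\<^sup>2)"

end

theory Submission
  imports Defs
begin

text \<open>
  \<open>Z\<^sub>k(\<theta>, u) = exp(i u X\<^sub>k) / M(\<theta>, u) - exp(-i u X\<^sub>k) / M(\<theta>, -u)\<close>, so every derivative of
  \<open>Z\<^sub>k\<close> in \<open>\<theta>\<close> comes from one of \<open>1/M\<close>. Since \<open>M\<close> is affine in \<open>p\<close> and its \<open>\<alpha>\<close>- and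
  \<open>\<beta>\<close>-parts separate, a partial derivative of \<open>M\<close> of order \<open>m\<close> is bounded by
  \<open>2 max(1, |u|)^m\<close>, while \<open>|M| \<ge> 1 - 2p \<ge> 1 - 2P\<close>. The second and third derivatives of
  \<open>1/M\<close> are polynomials in derivatives of \<open>M\<close> and powers of \<open>1/M\<close>, hence bounded by constant
  multiples of \<open>max(1, |u|)^2 / (1 - 2P)^3\<close> and \<open>max(1, |u|)^3 / (1 - 2P)^4\<close>. The mean value
  theorem along coordinate directions inside the slab \<open>0 < p \<le> P\<close> turns these into the
  Lipschitz bounds.
\<close>

lemma norm_diff_le_of_vector_derivative_bound:
  fixes g :: "real \<Rightarrow> 'a::real_normed_vector"
  assumes deriv: "\<And>t. t \<in> closed_segment a b \<Longrightarrow> (g has_vector_derivative g' t) (at t)"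
    and bound: "\<And>t. t \<in> closed_segment a b \<Longrightarrow> norm (g' t) \<le> B"
  shows "norm (g b - g a) \<le> B * \<bar>b - a\<bar>"
proof -
  have "norm (g b - g a) \<le> B * norm (b - a)"
  proof (rule differentiable_bound[where f' = "\<lambda>t h. h *\<^sub>R g' t"])
    show "(g has_derivative (\<lambda>h. h *\<^sub>R g' t)) (at t within closed_segment a b)"
      if "t \<in> closed_segment a b" for t
      using deriv[OF that] by (simp add: has_vector_derivative_def has_derivative_at_withinI)
    show "onorm (\<lambda>h. h *\<^sub>R g' t) \<le> B" if "t \<in> closed_segment a b" for t
      by (intro onorm_le) (simp add: mult.commute[of B] mult_left_mono[OF bound[OF that]])
  qed auto
  then show ?thesis by simp
qed

lemma add_scaleR_ebasis:
  "(p, \<alpha>, \<beta>) + t *\<^sub>R ebasis j =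
    (if j = 0 then (p + t, \<alpha>, \<beta>) else if j = 1 then (p, \<alpha> + t, \<beta>) else (p, \<alpha>, \<beta> + t))"
  by (simp add: ebasis_def)

lemma norm_diff_le_of_partial_bounds:
  fixes G :: "real \<times> real \<times> real \<Rightarrow> 'a::real_normed_vector"
  assumes "convex A"
    and deriv: "\<And>\<theta> t j. \<theta> + t *\<^sub>R ebasis j \<in> A \<times> UNIV \<Longrightarrow>
      ((\<lambda>t. G (\<theta> + t *\<^sub>R ebasis j)) has_vector_derivative G' j (\<theta> + t *\<^sub>R ebasis j)) (at t)"
    and bound: "\<And>\<theta> j. \<theta> \<in> A \<times> UNIV \<Longrightarrow> norm (G' j \<theta>) \<le> B"
    and "\<theta> \<in> A \<times> UNIV" "\<theta>' \<in> A \<times> UNIV"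
  shows "norm (G \<theta> - G \<theta>') \<le> 3 * B * norm (\<theta> - \<theta>')"
proof -
  \<comment> \<open>Go from \<theta>' to \<theta> changing one coordinate at a time; only the first coordinate
    is constrained, and it moves inside the convex set A.\<close>
  obtain p \<alpha> \<beta> p' \<alpha>' \<beta>' where \<theta>: "\<theta> = (p, \<alpha>, \<beta>)" and \<theta>': "\<theta>' = (p', \<alpha>', \<beta>')"
    by (metis prod_cases3)
  have "p \<in> A" "p' \<in> A" using assms \<theta> \<theta>' by auto
  have step: "norm (G (\<phi> + s *\<^sub>R ebasis j) - G \<phi>) \<le> B * \<bar>s\<bar>"
    if "\<And>t. t \<in> closed_segment 0 s \<Longrightarrow> \<phi> + t *\<^sub>R ebasis j \<in> A \<times> UNIV" for \<phi> s j
  proof -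
    have "norm (G (\<phi> + s *\<^sub>R ebasis j) - G (\<phi> + 0 *\<^sub>R ebasis j)) \<le> B * \<bar>s - 0\<bar>"
      by (rule norm_diff_le_of_vector_derivative_bound[where g' = "\<lambda>t. G' j (\<phi> + t *\<^sub>R ebasis j)"])
        (use deriv bound that in blast)+
    then show ?thesis by simp
  qed
  have "p' + t \<in> A" if "t \<in> closed_segment 0 (p - p')" for t
  proof -
    have "p' + t \<in> closed_segment p' p"
      using that by (auto simp: closed_segment_eq_real_ivl split: if_splits)
    then show ?thesis using closed_segment_subset \<open>p \<in> A\<close> \<open>p' \<in> A\<close> \<open>convex A\<close> by blast
  qed
  then have dp: "norm (G (p, \<alpha>', \<beta>') - G (p', \<alpha>', \<beta>')) \<le> B * \<bar>p - p'\<bar>"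
    using step[where \<phi> = "(p', \<alpha>', \<beta>')" and s = "p - p'" and j = 0] by (simp add: add_scaleR_ebasis)
  have d\<alpha>: "norm (G (p, \<alpha>, \<beta>') - G (p, \<alpha>', \<beta>')) \<le> B * \<bar>\<alpha> - \<alpha>'\<bar>"
    using step[where \<phi> = "(p, \<alpha>', \<beta>')" and s = "\<alpha> - \<alpha>'" and j = 1] \<open>p \<in> A\<close> by (simp add: add_scaleR_ebasis)
  have d\<beta>: "norm (G (p, \<alpha>, \<beta>) - G (p, \<alpha>, \<beta>')) \<le> B * \<bar>\<beta> - \<beta>'\<bar>"
    using step[where \<phi> = "(p, \<alpha>, \<beta>')" and s = "\<beta> - \<beta>'" and j = 2] \<open>p \<in> A\<close> by (simp add: add_scaleR_ebasis)
  have "norm (G \<theta> - G \<theta>') \<le> B * \<bar>\<beta> - \<beta>'\<bar> + B * \<bar>\<alpha> - \<alpha>'\<bar> + B * \<bar>p - p'\<bar>"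
    unfolding \<theta> \<theta>' by (rule norm_diff_triangle_le[OF norm_diff_triangle_le[OF d\<beta> d\<alpha>] dp])
  also have "\<dots> \<le> B * norm (\<theta> - \<theta>') + B * norm (\<theta> - \<theta>') + B * norm (\<theta> - \<theta>')"
  proof -
    have "0 \<le> B" using bound[OF \<open>\<theta> \<in> A \<times> UNIV\<close>, of 0] norm_ge_zero order_trans by blast
    have "norm (\<alpha> - \<alpha>', \<beta> - \<beta>') \<le> norm (\<theta> - \<theta>')"
      using norm_snd_le[where x = "p - p'" and y = "(\<alpha> - \<alpha>', \<beta> - \<beta>')"] by (simp add: \<theta> \<theta>')
    then have "\<bar>\<beta> - \<beta>'\<bar> \<le> norm (\<theta> - \<theta>')" "\<bar>\<alpha> - \<alpha>'\<bar> \<le> norm (\<theta> - \<theta>')"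
      using norm_snd_le[where x = "\<alpha> - \<alpha>'" and y = "\<beta> - \<beta>'"] norm_fst_le[where x = "\<alpha> - \<alpha>'" and y = "\<beta> - \<beta>'"] by simp_all
    moreover have "\<bar>p - p'\<bar> \<le> norm (\<theta> - \<theta>')"
      using norm_fst_le[where x = "p - p'" and y = "(\<alpha> - \<alpha>', \<beta> - \<beta>')"] by (simp add: \<theta> \<theta>')
    ultimately show ?thesis using \<open>0 \<le> B\<close> by (intro add_mono mult_left_mono)
  qed
  finally show ?thesis by simp
qed

lemma sqrt_sum_power2_le:
  assumes "finite I" "\<And>i. i \<in> I \<Longrightarrow> \<bar>f i\<bar> \<le> K"
  shows "sqrt (\<Sum>i\<in>I. (f i)\<^sup>2) \<le> sqrt (card I) * K"
proof (cases "I = {}")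
  case False
  then have "0 \<le> K" using assms(2) by fastforce
  have "\<bar>f i\<bar>\<^sup>2 \<le> K\<^sup>2" if "i \<in> I" for i
    using assms(2)[OF that] by (intro power_mono) auto
  then have "(\<Sum>i\<in>I. (f i)\<^sup>2) \<le> (\<Sum>i\<in>I. K\<^sup>2)"
    by (intro sum_mono) simp
  then have "sqrt (\<Sum>i\<in>I. (f i)\<^sup>2) \<le> sqrt (card I * K\<^sup>2)"
    by (simp add: real_sqrt_le_mono)
  also have "\<dots> = sqrt (card I) * K"
    using \<open>0 \<le> K\<close> by (simp add: real_sqrt_mult)
  finally show ?thesis .
qed simp

lemma pderiv3_cong_open:
  assumes "open S" "\<theta> \<in> S" "\<And>\<phi>. \<phi> \<in> S \<Longrightarrow> f \<phi> = g \<phi>"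
  shows "pderiv3 j f \<theta> = pderiv3 j g \<theta>"
  unfolding pderiv3_def
proof (rule vector_derivative_cong_eq)
  have "open ((\<lambda>t. \<theta> + t *\<^sub>R ebasis j) -` S)"
    using \<open>open S\<close> by (intro continuous_open_vimage continuous_intros)
  then have "eventually (\<lambda>t. t \<in> (\<lambda>t. \<theta> + t *\<^sub>R ebasis j) -` S) (nhds 0)"
    using \<open>\<theta> \<in> S\<close> by (intro eventually_nhds_in_open) auto
  then show "eventually (\<lambda>t. t \<in> UNIV \<longrightarrow> f (\<theta> + t *\<^sub>R ebasis j) = g (\<theta> + t *\<^sub>R ebasis j)) (nhds 0)"
    by eventually_elim (simp add: assms(3))
qed auto

text \<open>\<open>M_deriv v a b c\<close> is the partial derivative of \<open>\<theta> \<mapsto> Mfun \<theta> v\<close> taken \<open>a\<close> times in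
  \<open>p\<close>, \<open>b\<close> times in \<open>\<alpha>\<close> and \<open>c\<close> times in \<open>\<beta>\<close>; \<open>affine_deriv a c d\<close> is the \<open>a\<close>-th derivative
  of \<open>s \<mapsto> c + d s\<close> and \<open>expi_deriv v b\<close> the \<open>b\<close>-th derivative of \<open>x \<mapsto> exp(i v x)\<close>.\<close>

definition affine_deriv :: "nat \<Rightarrow> real \<Rightarrow> real \<Rightarrow> real \<Rightarrow> complex" where
  "affine_deriv a c d s = (if a = 0 then of_real (c + d * s) else if a = 1 then of_real d else 0)"

definition expi_deriv :: "real \<Rightarrow> nat \<Rightarrow> real \<Rightarrow> complex" where
  "expi_deriv v b x = (\<i> * of_real v) ^ b * exp (\<i> * of_real (v * x))"

lemma affine_deriv_has_vector_derivative:
  "((\<lambda>t. affine_deriv a c d (s + t)) has_vector_derivative affine_deriv (Suc a) c d (s + t)) (at t)"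
  by (cases a) (auto simp: affine_deriv_def intro!: derivative_eq_intros)

lemma expi_deriv_has_vector_derivative:
  "((\<lambda>t. expi_deriv v b (x + t)) has_vector_derivative expi_deriv v (Suc b) (x + t)) (at t)"
proof -
  have "((\<lambda>t. \<i> * of_real (v * (x + t))) has_vector_derivative \<i> * of_real v) (at t)"
    by (auto intro!: derivative_eq_intros)
  from field_vector_diff_chain_at[OF this DERIV_exp]
  have "((\<lambda>t. exp (\<i> * of_real (v * (x + t)))) has_vector_derivative
      \<i> * of_real v * exp (\<i> * of_real (v * (x + t)))) (at t)"
    by (simp add: o_def)
  from has_vector_derivative_mult_right[OF this, of "(\<i> * of_real v) ^ b"] show ?thesis
    by (simp add: expi_deriv_def mult_ac)
qed

definition M_deriv :: "real \<Rightarrow> nat \<Rightarrow> nat \<Rightarrow> nat \<Rightarrow> real \<times> real \<times> real \<Rightarrow> complex" where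
  "M_deriv v a b c \<theta> = (case \<theta> of (p, \<alpha>, \<beta>) \<Rightarrow>
     of_bool (c = 0) * (affine_deriv a 0 1 p * expi_deriv v b \<alpha>)
     + of_bool (b = 0) * (affine_deriv a 1 (-1) p * expi_deriv v c \<beta>))"

text \<open>Only the multiset of directions in \<open>js\<close> matters, and every \<open>j \<ge> 2\<close> denotes the
  \<open>\<beta>\<close>-direction, as in \<open>ebasis\<close>.\<close>

definition direction_count :: "nat \<Rightarrow> nat list \<Rightarrow> nat" where
  "direction_count d js = length (filter (\<lambda>j. min j 2 = d) js)"

definition M_derivs :: "real \<Rightarrow> nat list \<Rightarrow> real \<times> real \<times> real \<Rightarrow> complex" where
  "M_derivs v js = M_deriv v (direction_count 0 js) (direction_count 1 js) (direction_count 2 js)"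

lemma M_derivs_has_vector_derivative:
  "((\<lambda>t. M_derivs v js (\<theta> + t *\<^sub>R ebasis j)) has_vector_derivative
     M_derivs v (j # js) (\<theta> + t *\<^sub>R ebasis j)) (at t)"
proof -
  obtain p \<alpha> \<beta> where \<theta>: "\<theta> = (p, \<alpha>, \<beta>)" by (metis prod_cases3)
  let ?a = "direction_count 0 js" and ?b = "direction_count 1 js" and ?c = "direction_count 2 js"
  have js: "M_derivs v js = M_deriv v ?a ?b ?c" by (simp add: M_derivs_def)
  consider "j = 0" | "j = 1" | "2 \<le> j" by linarith
  then show ?thesis
  proof cases
    case 1
    then have "M_derivs v (j # js) = M_deriv v (Suc ?a) ?b ?c" "\<theta> + t *\<^sub>R ebasis j = (p + t, \<alpha>, \<beta>)"
      for t by (simp_all add: M_derivs_def direction_count_def \<theta> add_scaleR_ebasis)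
    moreover have "((\<lambda>t. M_deriv v ?a ?b ?c (p + t, \<alpha>, \<beta>)) has_vector_derivative
        M_deriv v (Suc ?a) ?b ?c (p + t, \<alpha>, \<beta>)) (at t)"
      unfolding M_deriv_def prod.case
      by (intro has_vector_derivative_add has_vector_derivative_mult_right has_vector_derivative_mult_left
          affine_deriv_has_vector_derivative)
    ultimately show ?thesis by (simp only: js)
  next
    case 2
    then have "M_derivs v (j # js) = M_deriv v ?a (Suc ?b) ?c" "\<theta> + t *\<^sub>R ebasis j = (p, \<alpha> + t, \<beta>)"
      for t by (simp_all add: M_derivs_def direction_count_def \<theta> add_scaleR_ebasis)
    moreover have "((\<lambda>t. M_deriv v ?a ?b ?c (p, \<alpha> + t, \<beta>)) has_vector_derivative
        M_deriv v ?a (Suc ?b) ?c (p, \<alpha> + t, \<beta>)) (at t)"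
      unfolding M_deriv_def prod.case
      using has_vector_derivative_add[OF has_vector_derivative_mult_right[OF
          has_vector_derivative_mult_right[OF expi_deriv_has_vector_derivative]] has_vector_derivative_const]
      by simp
    ultimately show ?thesis by (simp only: js)
  next
    case 3
    then have "min j 2 = 2" by simp
    with 3 have "M_derivs v (j # js) = M_deriv v ?a ?b (Suc ?c)" "\<theta> + t *\<^sub>R ebasis j = (p, \<alpha>, \<beta> + t)"
      for t by (simp_all add: M_derivs_def direction_count_def \<theta> add_scaleR_ebasis)
    moreover have "((\<lambda>t. M_deriv v ?a ?b ?c (p, \<alpha>, \<beta> + t)) has_vector_derivative
        M_deriv v ?a ?b (Suc ?c) (p, \<alpha>, \<beta> + t)) (at t)"
      unfolding M_deriv_def prod.case
      using has_vector_derivative_add[OF has_vector_derivative_const has_vector_derivative_mult_right[OF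
          has_vector_derivative_mult_right[OF expi_deriv_has_vector_derivative]]]
      by simp
    ultimately show ?thesis by (simp only: js)
  qed
qed

lemma Mfun_eq_M_derivs: "Mfun \<theta> v = M_derivs v [] \<theta>"
  by (cases \<theta>) (simp add: Mfun_def M_derivs_def M_deriv_def direction_count_def affine_deriv_def expi_deriv_def)

lemma norm_M_derivs_le:
  assumes "0 \<le> fst \<theta>" "fst \<theta> \<le> 1"
  shows "norm (M_derivs v js \<theta>) \<le> 2 * max 1 \<bar>v\<bar> ^ length js"
proof -
  obtain p \<alpha> \<beta> where \<theta>: "\<theta> = (p, \<alpha>, \<beta>)" by (metis prod_cases3)
  let ?w = "max 1 \<bar>v\<bar>" and ?a = "direction_count 0 js" and ?b = "direction_count 1 js"
    and ?c = "direction_count 2 js"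
  have length: "?a + ?b + ?c = length js"
    by (induction js) (auto simp: direction_count_def)
  have affine: "norm (affine_deriv a 0 1 p) \<le> 1" "norm (affine_deriv a 1 (-1) p) \<le> 1" for a
    using assms \<theta> by (auto simp: affine_deriv_def simp del: of_real_add of_real_diff)
  have expi: "norm (expi_deriv v b x) \<le> ?w ^ length js" if "b \<le> length js" for b x
  proof -
    have "norm (expi_deriv v b x) = \<bar>v\<bar> ^ b" by (simp add: expi_deriv_def norm_mult norm_power)
    also have "\<dots> \<le> ?w ^ b" by (intro power_mono) auto
    also have "\<dots> \<le> ?w ^ length js" using that by (intro power_increasing) auto
    finally show ?thesis .
  qed
  have "norm (M_derivs v js \<theta>) \<le> norm (affine_deriv ?a 0 1 p * expi_deriv v ?b \<alpha>)
      + norm (affine_deriv ?a 1 (-1) p * expi_deriv v ?c \<beta>)"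
    unfolding M_derivs_def M_deriv_def \<theta> prod.case
    by (rule order_trans[OF norm_triangle_ineq add_mono]) (simp_all add: norm_mult)
  also have "\<dots> \<le> 1 * ?w ^ length js + 1 * ?w ^ length js"
    unfolding norm_mult using affine expi length
    by (intro add_mono mult_mono) auto
  finally show ?thesis by simp
qed

lemma norm_Mfun_ge: "\<bar>\<bar>1 - fst \<theta>\<bar> - \<bar>fst \<theta>\<bar>\<bar> \<le> norm (Mfun \<theta> v)"
proof -
  obtain p \<alpha> \<beta> where \<theta>: "\<theta> = (p, \<alpha>, \<beta>)" by (metis prod_cases3)
  define A where "A = of_real (1 - p) * exp (\<i> * of_real (v * \<beta>))"
  define B where "B = of_real p * exp (\<i> * of_real (v * \<alpha>))"
  have "norm A = \<bar>1 - p\<bar>" "norm (- B) = \<bar>p\<bar>"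
    by (simp_all add: A_def B_def norm_mult del: of_real_diff)
  moreover have "Mfun \<theta> v = A - - B" by (simp add: \<theta> Mfun_def A_def B_def)
  ultimately show ?thesis using norm_triangle_ineq3[of A "- B"] by (simp add: \<theta>)
qed

lemma Mfun_nonzero:
  assumes "fst \<theta> \<noteq> 1/2"
  shows "Mfun \<theta> v \<noteq> 0"
proof
  assume "Mfun \<theta> v = 0"
  with norm_Mfun_ge[of \<theta> v] have "\<bar>1 - fst \<theta>\<bar> = \<bar>fst \<theta>\<bar>" by simp
  with assms show False by (auto simp: abs_if split: if_splits)
qed

lemma norm_inverse_Mfun_le:
  assumes "0 \<le> fst \<theta>" "fst \<theta> \<le> P" "P < 1/2"
  shows "norm (inverse (Mfun \<theta> v)) \<le> 1 / (1 - 2 * P)"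
proof -
  have "1 - 2 * P \<le> norm (Mfun \<theta> v)" using norm_Mfun_ge[of \<theta> v] assms by simp
  then have "inverse (norm (Mfun \<theta> v)) \<le> inverse (1 - 2 * P)"
    by (rule le_imp_inverse_le) (use assms in simp)
  then show ?thesis by (simp add: norm_inverse divide_inverse)
qed

lemma has_vector_derivative_inverse_power:
  fixes f :: "real \<Rightarrow> 'a::real_normed_field"
  assumes "(f has_vector_derivative f') (at t)" "f t \<noteq> 0"
  shows "((\<lambda>t. inverse (f t) ^ n) has_vector_derivative - (of_nat n * f' * inverse (f t) ^ Suc n)) (at t)"
proof -
  have "((\<lambda>z. inverse z ^ n) has_field_derivative - (of_nat n * inverse (f t) ^ Suc n)) (at (f t))"
  proof (rule DERIV_cong)
    show "((\<lambda>z. inverse z ^ n) has_field_derivative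
        of_nat n * inverse (f t) ^ (n - 1) * - (inverse (f t) * inverse (f t))) (at (f t))"
      using assms(2) by (auto intro!: derivative_eq_intros)
    show "of_nat n * inverse (f t) ^ (n - 1) * - (inverse (f t) * inverse (f t)) = - (of_nat n * inverse (f t) ^ Suc n)"
      by (cases n) (simp_all add: algebra_simps)
  qed
  from field_vector_diff_chain_at[OF assms(1) this] show ?thesis
    by (simp add: o_def algebra_simps)
qed

lemma Mfun_has_vector_derivative:
  "((\<lambda>t. Mfun (\<theta> + t *\<^sub>R ebasis j) v) has_vector_derivative M_derivs v [j] (\<theta> + t *\<^sub>R ebasis j)) (at t)"
  unfolding Mfun_eq_M_derivs by (rule M_derivs_has_vector_derivative)

lemma inverse_Mfun_power_has_vector_derivative:
  assumes "fst (\<theta> + t *\<^sub>R ebasis j) \<noteq> 1/2"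
  shows "((\<lambda>t. inverse (Mfun (\<theta> + t *\<^sub>R ebasis j) v) ^ n) has_vector_derivative
    - (of_nat n * M_derivs v [j] (\<theta> + t *\<^sub>R ebasis j) * inverse (Mfun (\<theta> + t *\<^sub>R ebasis j) v) ^ Suc n)) (at t)"
  by (rule has_vector_derivative_inverse_power[OF Mfun_has_vector_derivative Mfun_nonzero[OF assms]])

definition Minv_deriv1 :: "real \<Rightarrow> nat \<Rightarrow> real \<times> real \<times> real \<Rightarrow> complex" where
  "Minv_deriv1 v j \<theta> = - M_derivs v [j] \<theta> * inverse (Mfun \<theta> v) ^ 2"

definition Minv_deriv2 :: "real \<Rightarrow> nat \<Rightarrow> nat \<Rightarrow> real \<times> real \<times> real \<Rightarrow> complex" where
  "Minv_deriv2 v i j \<theta> = - M_derivs v [i, j] \<theta> * inverse (Mfun \<theta> v) ^ 2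
     + 2 * M_derivs v [i] \<theta> * M_derivs v [j] \<theta> * inverse (Mfun \<theta> v) ^ 3"

definition Minv_deriv3 :: "real \<Rightarrow> nat \<Rightarrow> nat \<Rightarrow> nat \<Rightarrow> real \<times> real \<times> real \<Rightarrow> complex" where
  "Minv_deriv3 v k i j \<theta> = - M_derivs v [k, i, j] \<theta> * inverse (Mfun \<theta> v) ^ 2
     + 2 * (M_derivs v [i, j] \<theta> * M_derivs v [k] \<theta> + M_derivs v [k, i] \<theta> * M_derivs v [j] \<theta>
            + M_derivs v [i] \<theta> * M_derivs v [k, j] \<theta>) * inverse (Mfun \<theta> v) ^ 3
     - 6 * M_derivs v [i] \<theta> * M_derivs v [j] \<theta> * M_derivs v [k] \<theta> * inverse (Mfun \<theta> v) ^ 4"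

lemma inverse_Mfun_has_vector_derivative:
  assumes "fst (\<theta> + t *\<^sub>R ebasis j) \<noteq> 1/2"
  shows "((\<lambda>t. inverse (Mfun (\<theta> + t *\<^sub>R ebasis j) v)) has_vector_derivative
    Minv_deriv1 v j (\<theta> + t *\<^sub>R ebasis j)) (at t)"
  using inverse_Mfun_power_has_vector_derivative[OF assms, of v 1] by (simp add: Minv_deriv1_def power2_eq_square)

lemma Minv_deriv1_has_vector_derivative:
  assumes "fst (\<theta> + t *\<^sub>R ebasis i) \<noteq> 1/2"
  shows "((\<lambda>t. Minv_deriv1 v j (\<theta> + t *\<^sub>R ebasis i)) has_vector_derivative
    Minv_deriv2 v i j (\<theta> + t *\<^sub>R ebasis i)) (at t)"
  unfolding Minv_deriv1_def
  by (rule has_vector_derivative_eq_rhs,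
      (rule has_vector_derivative_minus has_vector_derivative_mult M_derivs_has_vector_derivative
        inverse_Mfun_power_has_vector_derivative assms)+)
    (simp add: Minv_deriv2_def algebra_simps)

lemma Minv_deriv2_has_vector_derivative:
  assumes "fst (\<theta> + t *\<^sub>R ebasis k) \<noteq> 1/2"
  shows "((\<lambda>t. Minv_deriv2 v i j (\<theta> + t *\<^sub>R ebasis k)) has_vector_derivative
    Minv_deriv3 v k i j (\<theta> + t *\<^sub>R ebasis k)) (at t)"
  unfolding Minv_deriv2_def
  by (rule has_vector_derivative_eq_rhs,
      (rule has_vector_derivative_add has_vector_derivative_minus has_vector_derivative_mult
        has_vector_derivative_const M_derivs_has_vector_derivative inverse_Mfun_power_has_vector_derivative assms)+)
    (simp add: Minv_deriv3_def algebra_simps)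

lemma norm_Minv_deriv2_le:
  assumes "0 \<le> fst \<theta>" "fst \<theta> \<le> 1" "norm (inverse (Mfun \<theta> v)) \<le> r" "1 \<le> r"
  shows "norm (Minv_deriv2 v i j \<theta>) \<le> 10 * max 1 \<bar>v\<bar> ^ 2 * r ^ 3"
proof -
  let ?w = "max 1 \<bar>v\<bar>" and ?I = "inverse (Mfun \<theta> v)"
  have D: "norm (M_derivs v [i, j] \<theta>) \<le> 2 * ?w ^ 2"
    "norm (M_derivs v [i] \<theta>) \<le> 2 * ?w" "norm (M_derivs v [j] \<theta>) \<le> 2 * ?w"
    using norm_M_derivs_le[OF assms(1,2), of v "[i, j]"] norm_M_derivs_le[OF assms(1,2), of v "[i]"]
      norm_M_derivs_le[OF assms(1,2), of v "[j]"] by (simp_all add: power2_eq_square)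
  have I: "norm (?I ^ n) \<le> r ^ 3" if "n \<le> 3" for n
  proof -
    have "norm (?I ^ n) \<le> r ^ n" unfolding norm_power by (rule power_mono) (use assms(3) in auto)
    also have "\<dots> \<le> r ^ 3" using that assms(4) by (rule power_increasing)
    finally show ?thesis .
  qed
  have "norm (Minv_deriv2 v i j \<theta>) \<le> norm (M_derivs v [i, j] \<theta>) * norm (?I ^ 2)
      + 2 * norm (M_derivs v [i] \<theta>) * norm (M_derivs v [j] \<theta>) * norm (?I ^ 3)"
    unfolding Minv_deriv2_def by (rule order_trans[OF norm_triangle_ineq]) (simp add: norm_mult)
  also have "\<dots> \<le> (2 * ?w ^ 2) * r ^ 3 + 2 * (2 * ?w) * (2 * ?w) * r ^ 3"
    using D I by (intro add_mono mult_mono mult_left_mono) auto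
  finally show ?thesis by (simp add: power2_eq_square algebra_simps)
qed

lemma norm_Minv_deriv3_le:
  assumes "0 \<le> fst \<theta>" "fst \<theta> \<le> 1" "norm (inverse (Mfun \<theta> v)) \<le> r" "1 \<le> r"
  shows "norm (Minv_deriv3 v k i j \<theta>) \<le> 74 * max 1 \<bar>v\<bar> ^ 3 * r ^ 4"
proof -
  let ?w = "max 1 \<bar>v\<bar>" and ?I = "inverse (Mfun \<theta> v)"
  let ?D = "\<lambda>js. norm (M_derivs v js \<theta>)"
  have D3: "?D [k, i, j] \<le> 2 * ?w ^ 3"
    using norm_M_derivs_le[OF assms(1,2), of v "[k, i, j]"] by (simp add: power3_eq_cube)
  have D2: "?D [a, b] \<le> 2 * ?w ^ 2" for a b
    using norm_M_derivs_le[OF assms(1,2), of v "[a, b]"] by (simp add: power2_eq_square)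
  have D1: "?D [a] \<le> 2 * ?w" for a
    using norm_M_derivs_le[OF assms(1,2), of v "[a]"] by simp
  have I: "norm (?I ^ n) \<le> r ^ 4" if "n \<le> 4" for n
  proof -
    have "norm (?I ^ n) \<le> r ^ n" unfolding norm_power by (rule power_mono) (use assms(3) in auto)
    also have "\<dots> \<le> r ^ 4" using that assms(4) by (rule power_increasing)
    finally show ?thesis .
  qed
  have triangle3: "norm (a + b + c) \<le> norm a + norm b + norm c" "norm (a + b - c) \<le> norm a + norm b + norm c"
    for a b c :: complex
    using norm_triangle_ineq[of a b] norm_triangle_ineq[of "a + b" c] norm_triangle_ineq4[of "a + b" c]
    by linarith+
  have "norm (Minv_deriv3 v k i j \<theta>) \<le> ?D [k, i, j] * norm (?I ^ 2)
      + 2 * (?D [i, j] * ?D [k] + ?D [k, i] * ?D [j] + ?D [i] * ?D [k, j]) * norm (?I ^ 3)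
      + 6 * ?D [i] * ?D [j] * ?D [k] * norm (?I ^ 4)"
    unfolding Minv_deriv3_def
    by (rule order_trans[OF triangle3(2) add_mono[OF add_mono]])
      (auto simp: norm_mult intro!: mult_right_mono order_trans[OF triangle3(1)])
  also have "\<dots> \<le> (2 * ?w ^ 3) * r ^ 4
      + 2 * ((2 * ?w ^ 2) * (2 * ?w) + (2 * ?w ^ 2) * (2 * ?w) + (2 * ?w) * (2 * ?w ^ 2)) * r ^ 4
      + 6 * (2 * ?w) * (2 * ?w) * (2 * ?w) * r ^ 4"
    using D3 D2 D1 I by (intro add_mono mult_mono mult_left_mono) auto
  finally show ?thesis by (simp add: power2_eq_square power3_eq_cube algebra_simps)
qed

definition twisted_diff :: "real \<Rightarrow> complex \<Rightarrow> complex \<Rightarrow> complex" where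
  "twisted_diff y a b = exp (\<i> * of_real y) * a - exp (- \<i> * of_real y) * b"

lemma norm_twisted_diff_le: "norm (twisted_diff y a b) \<le> norm a + norm b"
proof -
  have "norm (exp (- \<i> * of_real y)) = 1"
    using norm_exp_i_times[of "- y"] by simp
  then show ?thesis
    using norm_triangle_ineq4[of "exp (\<i> * of_real y) * a" "exp (- \<i> * of_real y) * b"]
    by (simp add: twisted_diff_def norm_mult)
qed

lemma twisted_diff_has_vector_derivative:
  "(f has_vector_derivative f') F \<Longrightarrow> (g has_vector_derivative g') F \<Longrightarrow>
    ((\<lambda>t. twisted_diff y (f t) (g t)) has_vector_derivative twisted_diff y f' g') F"
  unfolding twisted_diff_def
  by (intro has_vector_derivative_diff has_vector_derivative_mult_right)

lemma Zfun_eq_twisted_diff: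
  "Zfun X k \<theta> u = twisted_diff (u * X k) (inverse (Mfun \<theta> u)) (inverse (Mfun \<theta> (- u)))"
  by (simp add: Zfun_def twisted_diff_def divide_inverse)

lemma pderiv3_eqI:
  "((\<lambda>t. f (\<theta> + t *\<^sub>R ebasis j)) has_vector_derivative D) (at 0) \<Longrightarrow> pderiv3 j f \<theta> = D"
  unfolding pderiv3_def by (rule vector_derivative_at)

lemma pderiv3_Zfun:
  assumes "fst \<theta> \<noteq> 1/2"
  shows "pderiv3 j (\<lambda>\<theta>. Zfun X k \<theta> u) \<theta>
    = twisted_diff (u * X k) (Minv_deriv1 u j \<theta>) (Minv_deriv1 (- u) j \<theta>)"
proof (rule pderiv3_eqI)
  have "((\<lambda>t. Zfun X k (\<theta> + t *\<^sub>R ebasis j) u) has_vector_derivative twisted_diff (u * X k)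
      (Minv_deriv1 u j (\<theta> + 0 *\<^sub>R ebasis j)) (Minv_deriv1 (- u) j (\<theta> + 0 *\<^sub>R ebasis j))) (at 0)"
    unfolding Zfun_eq_twisted_diff
    by (intro twisted_diff_has_vector_derivative inverse_Mfun_has_vector_derivative) (use assms in simp)+
  then show "((\<lambda>t. Zfun X k (\<theta> + t *\<^sub>R ebasis j) u) has_vector_derivative twisted_diff (u * X k)
      (Minv_deriv1 u j \<theta>) (Minv_deriv1 (- u) j \<theta>)) (at 0)"
    by simp
qed

lemma pderiv3_pderiv3_Zfun:
  assumes "fst \<theta> \<noteq> 1/2"
  shows "pderiv3 i (pderiv3 j (\<lambda>\<theta>. Zfun X k \<theta> u)) \<theta>
    = twisted_diff (u * X k) (Minv_deriv2 u i j \<theta>) (Minv_deriv2 (- u) i j \<theta>)"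
proof -
  have "open {\<phi> :: real \<times> real \<times> real. fst \<phi> \<noteq> 1/2}"
    by (intro open_Collect_neq continuous_intros)
  then have "pderiv3 i (pderiv3 j (\<lambda>\<theta>. Zfun X k \<theta> u)) \<theta>
      = pderiv3 i (\<lambda>\<phi>. twisted_diff (u * X k) (Minv_deriv1 u j \<phi>) (Minv_deriv1 (- u) j \<phi>)) \<theta>"
    using assms by (intro pderiv3_cong_open) (auto simp: pderiv3_Zfun)
  also have "\<dots> = twisted_diff (u * X k) (Minv_deriv2 u i j \<theta>) (Minv_deriv2 (- u) i j \<theta>)"
  proof (rule pderiv3_eqI)
    have "((\<lambda>t. twisted_diff (u * X k) (Minv_deriv1 u j (\<theta> + t *\<^sub>R ebasis i)) (Minv_deriv1 (- u) j (\<theta> + t *\<^sub>R ebasis i)))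
        has_vector_derivative twisted_diff (u * X k)
          (Minv_deriv2 u i j (\<theta> + 0 *\<^sub>R ebasis i)) (Minv_deriv2 (- u) i j (\<theta> + 0 *\<^sub>R ebasis i))) (at 0)"
      by (intro twisted_diff_has_vector_derivative Minv_deriv1_has_vector_derivative) (use assms in simp)+
    then show "((\<lambda>t. twisted_diff (u * X k) (Minv_deriv1 u j (\<theta> + t *\<^sub>R ebasis i)) (Minv_deriv1 (- u) j (\<theta> + t *\<^sub>R ebasis i)))
        has_vector_derivative twisted_diff (u * X k) (Minv_deriv2 u i j \<theta>) (Minv_deriv2 (- u) i j \<theta>)) (at 0)"
      by simp
  qed
  finally show ?thesis .
qed

lemma norm_pderiv3_Zfun_diff_le:
  assumes "P < 1/2" "\<theta> \<in> {0<..P} \<times> UNIV" "\<theta>' \<in> {0<..P} \<times> UNIV"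
  shows "norm (pderiv3 j (\<lambda>\<theta>. Zfun X k \<theta> u) \<theta> - pderiv3 j (\<lambda>\<theta>. Zfun X k \<theta> u) \<theta>')
    \<le> 60 * max 1 \<bar>u\<bar> ^ 2 / (1 - 2 * P) ^ 3 * norm (\<theta> - \<theta>')"
proof -
  let ?r = "1 / (1 - 2 * P)" and ?y = "u * X k"
  have strip: "fst \<phi> \<noteq> 1/2" "0 \<le> fst \<phi>" "fst \<phi> \<le> 1" "norm (inverse (Mfun \<phi> v)) \<le> ?r" "1 \<le> ?r"
    if "\<phi> \<in> {0<..P} \<times> UNIV" for \<phi> v
    using that assms(1) norm_inverse_Mfun_le[of \<phi> P v] by auto
  have "norm (twisted_diff ?y (Minv_deriv1 u j \<theta>) (Minv_deriv1 (- u) j \<theta>)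
      - twisted_diff ?y (Minv_deriv1 u j \<theta>') (Minv_deriv1 (- u) j \<theta>'))
    \<le> 3 * (20 * max 1 \<bar>u\<bar> ^ 2 * ?r ^ 3) * norm (\<theta> - \<theta>')"
  proof (rule norm_diff_le_of_partial_bounds[where A = "{0<..P}"
        and G' = "\<lambda>i \<phi>. twisted_diff ?y (Minv_deriv2 u i j \<phi>) (Minv_deriv2 (- u) i j \<phi>)"])
    show "((\<lambda>t. twisted_diff ?y (Minv_deriv1 u j (\<phi> + t *\<^sub>R ebasis i)) (Minv_deriv1 (- u) j (\<phi> + t *\<^sub>R ebasis i)))
        has_vector_derivative twisted_diff ?y (Minv_deriv2 u i j (\<phi> + t *\<^sub>R ebasis i))
          (Minv_deriv2 (- u) i j (\<phi> + t *\<^sub>R ebasis i))) (at t)"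
      if "\<phi> + t *\<^sub>R ebasis i \<in> {0<..P} \<times> UNIV" for \<phi> t i
      using strip(1)[OF that] by (intro twisted_diff_has_vector_derivative Minv_deriv1_has_vector_derivative)
    show "norm (twisted_diff ?y (Minv_deriv2 u i j \<phi>) (Minv_deriv2 (- u) i j \<phi>)) \<le> 20 * max 1 \<bar>u\<bar> ^ 2 * ?r ^ 3"
      if "\<phi> \<in> {0<..P} \<times> UNIV" for \<phi> i
    proof -
      have "norm (Minv_deriv2 v i j \<phi>) \<le> 10 * max 1 \<bar>v\<bar> ^ 2 * ?r ^ 3" for v
        using strip[OF that] by (intro norm_Minv_deriv2_le) auto
      from this[of u] this[of "- u"]
      have "norm (Minv_deriv2 u i j \<phi>) + norm (Minv_deriv2 (- u) i j \<phi>) \<le> 20 * max 1 \<bar>u\<bar> ^ 2 * ?r ^ 3"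
        by simp
      then show ?thesis using norm_twisted_diff_le by (rule order_trans[rotated])
    qed
  qed (use assms in auto)
  then show ?thesis
    using assms strip(1) by (simp add: pderiv3_Zfun power_one_over field_simps)
qed

lemma norm_pderiv3_pderiv3_Zfun_diff_le:
  assumes "P < 1/2" "\<theta> \<in> {0<..P} \<times> UNIV" "\<theta>' \<in> {0<..P} \<times> UNIV"
  shows "norm (pderiv3 i (pderiv3 j (\<lambda>\<theta>. Zfun X k \<theta> u)) \<theta> - pderiv3 i (pderiv3 j (\<lambda>\<theta>. Zfun X k \<theta> u)) \<theta>')
    \<le> 444 * max 1 \<bar>u\<bar> ^ 3 / (1 - 2 * P) ^ 4 * norm (\<theta> - \<theta>')"
proof -
  let ?r = "1 / (1 - 2 * P)" and ?y = "u * X k"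
  have strip: "fst \<phi> \<noteq> 1/2" "0 \<le> fst \<phi>" "fst \<phi> \<le> 1" "norm (inverse (Mfun \<phi> v)) \<le> ?r" "1 \<le> ?r"
    if "\<phi> \<in> {0<..P} \<times> UNIV" for \<phi> v
    using that assms(1) norm_inverse_Mfun_le[of \<phi> P v] by auto
  have "norm (twisted_diff ?y (Minv_deriv2 u i j \<theta>) (Minv_deriv2 (- u) i j \<theta>)
      - twisted_diff ?y (Minv_deriv2 u i j \<theta>') (Minv_deriv2 (- u) i j \<theta>'))
    \<le> 3 * (148 * max 1 \<bar>u\<bar> ^ 3 * ?r ^ 4) * norm (\<theta> - \<theta>')"
  proof (rule norm_diff_le_of_partial_bounds[where A = "{0<..P}"
        and G' = "\<lambda>k \<phi>. twisted_diff ?y (Minv_deriv3 u k i j \<phi>) (Minv_deriv3 (- u) k i j \<phi>)"])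
    show "((\<lambda>t. twisted_diff ?y (Minv_deriv2 u i j (\<phi> + t *\<^sub>R ebasis l)) (Minv_deriv2 (- u) i j (\<phi> + t *\<^sub>R ebasis l)))
        has_vector_derivative twisted_diff ?y (Minv_deriv3 u l i j (\<phi> + t *\<^sub>R ebasis l))
          (Minv_deriv3 (- u) l i j (\<phi> + t *\<^sub>R ebasis l))) (at t)"
      if "\<phi> + t *\<^sub>R ebasis l \<in> {0<..P} \<times> UNIV" for \<phi> t l
      using strip(1)[OF that] by (intro twisted_diff_has_vector_derivative Minv_deriv2_has_vector_derivative)
    show "norm (twisted_diff ?y (Minv_deriv3 u l i j \<phi>) (Minv_deriv3 (- u) l i j \<phi>)) \<le> 148 * max 1 \<bar>u\<bar> ^ 3 * ?r ^ 4"
      if "\<phi> \<in> {0<..P} \<times> UNIV" for \<phi> l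
    proof -
      have "norm (Minv_deriv3 v l i j \<phi>) \<le> 74 * max 1 \<bar>v\<bar> ^ 3 * ?r ^ 4" for v
        using strip[OF that] by (intro norm_Minv_deriv3_le) auto
      from this[of u] this[of "- u"]
      have "norm (Minv_deriv3 u l i j \<phi>) + norm (Minv_deriv3 (- u) l i j \<phi>) \<le> 148 * max 1 \<bar>u\<bar> ^ 3 * ?r ^ 4"
        by simp
      then show ?thesis using norm_twisted_diff_le by (rule order_trans[rotated])
    qed
  qed (use assms in auto)
  then show ?thesis
    using assms strip(1) by (simp add: pderiv3_pderiv3_Zfun power_one_over field_simps)
qed

lemma grad_dist_Zfun_le:
  assumes "P < 1/2" "\<theta> \<in> {0<..P} \<times> UNIV" "\<theta>' \<in> {0<..P} \<times> UNIV"
  shows "grad_dist (\<lambda>\<theta>. Zfun X k \<theta> u) \<theta> \<theta>' \<le> norm (\<theta> - \<theta>') * (120 * max 1 \<bar>u\<bar> ^ 2 / (1 - 2 * P) ^ 3)"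
proof -
  let ?K = "60 * max 1 \<bar>u\<bar> ^ 2 / (1 - 2 * P) ^ 3 * norm (\<theta> - \<theta>')"
  have "grad_dist (\<lambda>\<theta>. Zfun X k \<theta> u) \<theta> \<theta>' \<le> sqrt (card {..<3::nat}) * ?K"
    unfolding grad_dist_def using norm_pderiv3_Zfun_diff_le[OF assms]
    by (intro sqrt_sum_power2_le) auto
  also have "\<dots> \<le> 2 * ?K"
  proof (rule mult_right_mono)
    have "sqrt 3 \<le> sqrt (2\<^sup>2)" by (rule real_sqrt_le_mono) simp
    then show "sqrt (card {..<3::nat}) \<le> 2" by simp
    show "0 \<le> ?K" using assms(1) by simp
  qed
  finally show ?thesis by (simp add: mult_ac)
qed

lemma hess_dist_Zfun_le:
  assumes "P < 1/2" "\<theta> \<in> {0<..P} \<times> UNIV" "\<theta>' \<in> {0<..P} \<times> UNIV"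
  shows "hess_dist (\<lambda>\<theta>. Zfun X k \<theta> u) \<theta> \<theta>' \<le> norm (\<theta> - \<theta>') * (1332 * max 1 \<bar>u\<bar> ^ 3 / (1 - 2 * P) ^ 4)"
proof -
  let ?K = "444 * max 1 \<bar>u\<bar> ^ 3 / (1 - 2 * P) ^ 4 * norm (\<theta> - \<theta>')"
  let ?H = "\<lambda>i j \<phi>. pderiv3 i (pderiv3 j (\<lambda>\<theta>. Zfun X k \<theta> u)) \<phi>"
  have "hess_dist (\<lambda>\<theta>. Zfun X k \<theta> u) \<theta> \<theta>'
      = sqrt (\<Sum>ij\<in>{..<3} \<times> {..<3}. (norm (?H (fst ij) (snd ij) \<theta> - ?H (fst ij) (snd ij) \<theta>'))\<^sup>2)"
    unfolding hess_dist_def sum.cartesian_product by (simp add: case_prod_beta)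
  also have "\<dots> \<le> sqrt (card ({..<3::nat} \<times> {..<3::nat})) * ?K"
    using norm_pderiv3_pderiv3_Zfun_diff_le[OF assms] by (intro sqrt_sum_power2_le) auto
  also have "sqrt (card ({..<3::nat} \<times> {..<3::nat})) = 3"
    by (simp add: card_cartesian_product)
  finally show ?thesis by (simp add: mult_ac)
qed

theorem lemma2:
  shows "\<exists>C>0. \<forall>(\<Theta> :: (real \<times> real \<times> real) set) (P :: real) (n :: nat) (X :: nat \<Rightarrow> real).
     compact \<Theta>
     \<longrightarrow> \<Theta> \<subseteq> {(p, \<alpha>, \<beta>). 0 < p \<and> p < 1/2 \<and> \<alpha> \<noteq> \<beta>}
     \<longrightarrow> P < 1/2
     \<longrightarrow> (\<forall>(p, \<alpha>, \<beta>) \<in> \<Theta>. p \<le> P)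
     \<longrightarrow> (\<forall>u :: real. \<forall>\<theta>\<in>\<Theta>. \<forall>\<theta>'\<in>\<Theta>. \<forall>k\<in>{1..n}.
           grad_dist (\<lambda>t. Zfun X k t u) \<theta> \<theta>'
             \<le> norm (\<theta> - \<theta>') * (C * (1 + \<bar>u\<bar> + u\<^sup>2) / (1 - 2 * P) ^ 3)
         \<and> hess_dist (\<lambda>t. Zfun X k t u) \<theta> \<theta>'
             \<le> norm (\<theta> - \<theta>') * (C * (1 + \<bar>u\<bar> + u\<^sup>2 + \<bar>u\<bar> ^ 3) / (1 - 2 * P) ^ 4))"
proof (intro exI[of _ 1332] conjI allI impI ballI)
  fix \<Theta> :: "(real \<times> real \<times> real) set" and P u :: real and X :: "nat \<Rightarrow> real" and \<theta> \<theta>' k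
  assume \<Theta>: "\<Theta> \<subseteq> {(p, \<alpha>, \<beta>). 0 < p \<and> p < 1/2 \<and> \<alpha> \<noteq> \<beta>}" "\<forall>(p, \<alpha>, \<beta>) \<in> \<Theta>. p \<le> P"
    and "P < 1/2" "\<theta> \<in> \<Theta>" "\<theta>' \<in> \<Theta>"
  have strip: "\<theta> \<in> {0<..P} \<times> UNIV" "\<theta>' \<in> {0<..P} \<times> UNIV"
    using \<Theta> \<open>\<theta> \<in> \<Theta>\<close> \<open>\<theta>' \<in> \<Theta>\<close> by fastforce+
  have "0 < 1 - 2 * P" using \<open>P < 1/2\<close> by simp
  have "120 * max 1 \<bar>u\<bar> ^ 2 \<le> 1332 * (1 + \<bar>u\<bar> + u\<^sup>2)"
    by (cases "\<bar>u\<bar> \<le> 1") (auto simp: max_def)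
  with \<open>0 < 1 - 2 * P\<close> show "grad_dist (\<lambda>t. Zfun X k t u) \<theta> \<theta>'
      \<le> norm (\<theta> - \<theta>') * (1332 * (1 + \<bar>u\<bar> + u\<^sup>2) / (1 - 2 * P) ^ 3)"
    by (intro order_trans[OF grad_dist_Zfun_le[OF \<open>P < 1/2\<close> strip]] mult_left_mono divide_right_mono) auto
  have "1332 * max 1 \<bar>u\<bar> ^ 3 \<le> 1332 * (1 + \<bar>u\<bar> + u\<^sup>2 + \<bar>u\<bar> ^ 3)"
    by (cases "\<bar>u\<bar> \<le> 1") (auto simp: max_def)
  with \<open>0 < 1 - 2 * P\<close> show "hess_dist (\<lambda>t. Zfun X k t u) \<theta> \<theta>'
      \<le> norm (\<theta> - \<theta>') * (1332 * (1 + \<bar>u\<bar> + u\<^sup>2 + \<bar>u\<bar> ^ 3) / (1 - 2 * P) ^ 4)"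
    by (intro order_trans[OF hess_dist_Zfun_le[OF \<open>P < 1/2\<close> strip]] mult_left_mono divide_right_mono) auto
qed simp

end
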